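(* Let $\mathcal{H}_\xi$, $C$, $\Omega$, $D$, $\gamma$ be as in the context. Then \[ D^2=\Omega\otimes1-2\int_{|v|=1}\tilde\xi(v\otimes\bar v)\otimes\gamma(v\otimes\bar v)\,dv \quad\text{in }\mathcal{H}_\xi\otimes C. \]
   Context: Let $\mathfrak{g}=\mathfrak{gl}_n(\mathbb{C})$ ($n\ge1$), $H=\mathcal{U}(\mathfrak{g})$, $\mathfrak{h}=\mathbb{C}^n$ the standard module, $\mathfrak{h}^*$ its dual with natural pairing $(\cdot,\cdot)$, $V=\mathfrak{h}\oplus\mathfrak{h}^*$. Fix the standard basis $y_1,\dots,y_n$ of $\mathfrak{h}$ and dual basis $x_1,\dots,x_n$; $E_{ij}$ sends $y_j$ to $y_i$. For $v\in\mathfrak{h}$, $v\otimes\bar v=\sum_{i,j}v_i\bar v_jE_{ij}\in\mathfrak{gl}_n$ (the map $w\mapsto v\sum_k w_k\bar v_k$); for a polynomial $q$, $q(v\otimes\bar v)$ is the corresponding element of $\mathcal{U}(\mathfrak{gl}_n)$; $\int_{|v|=1}\cdots dv$ is integration over the Euclidean unit sphere of $\mathbb{C}^n$ with respect to surface measure. Let $\xi$ be a polynomial, $\tilde\xi(z)=\frac1{2\pi^n}\partial^n(z^n\xi(z))$, and define $\kappa:V\wedge V\to H$ by $\kappa(x,x')=\kappa(y,y')=0$, $\kappa(y,x)=\int_{|v|=1}(x,(v\otimes\bar v)\cdot y)\tilde\xi(v\otimes\bar v)\,dv$ for $x,x'\in\mathfrak{h}^*,y,y'\in\mathfrak{h}$.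 $\mathcal{H}_\xi=(T(V)\rtimes H)/I_\kappa$ with $I_\kappa$ generated by $uw-wu-\kappa(u,w)$, $u,w\in V$. Let $C=C(V)$ be the Clifford algebra for the symmetric form $\langle x+y,x'+y'\rangle=(x,y')+(x',y)$, with relations $uw+wu=2\langle u,w\rangle$. $\Omega=\sum_i(x_iy_i+y_ix_i)$, $D=\sum_i(x_i\otimes y_i+y_i\otimes x_i)\in\mathcal{H}_\xi\otimes C$, and $\gamma:\mathcal{U}(\mathfrak{gl}_n)\to C$ is the algebra map with $\gamma(E_{ij})=\frac14(y_ix_j-x_jy_i)$. *)

theory Defs
  imports "HOL-Analysis.Analysis" "HOL-Computational_Algebra.Polynomial"
begin

text \<open>The standard module h = C^n is modelled as complex^'n for a finite index type 'n
  (n = CARD('n) >= 1).  Its Euclidean norm is the norm of complex^'n.\<close>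

text \<open>Integral over the Euclidean unit sphere of C^n = R^(2n) w.r.t. surface measure,
  via the polar-coordinate (cone) formula: the integral over the sphere of g equals
  d times the integral over the unit ball of g(u/|u|), d = 2n the real dimension.\<close>
definition sphere_int :: "(complex^'n::finite \<Rightarrow> complex) \<Rightarrow> complex" where
  "sphere_int g = of_real (2 * real CARD('n)) * integral (cball 0 1) (\<lambda>u. g (u /\<^sub>R norm u))"

definition xi_tilde :: "nat \<Rightarrow> complex poly \<Rightarrow> complex poly" where
  "xi_tilde n xi = smult (1 / (2 * of_real pi ^ n)) ((pderiv ^^ n) (monom 1 n * xi))"

text \<open>For a word w = [(a1,b1),...,(ak,bk)] the scalar prod v_at conj(v_bt) and the algebra
  element e_a1b1 ... e_akbk; summing over all words of length k expands (v (x) vbar)^k.\<close>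
definition wmono :: "('n::finite \<times> 'n) list \<Rightarrow> complex^'n \<Rightarrow> complex" where
  "wmono w v = prod_list (map (\<lambda>(a,b). v$a * cnj (v$b)) w)"

definition wprod :: "('n \<Rightarrow> 'n \<Rightarrow> 'a::ring_1) \<Rightarrow> ('n \<times> 'n) list \<Rightarrow> 'a" where
  "wprod e w = prod_list (map (\<lambda>(a,b). e a b) w)"

text \<open>Integral over the unit sphere of  s(v) q(v (x) vbar), q a polynomial, computed in a
  complex algebra A (scalars acting through the central ring map phi), where the images of
  E_ab in A are e a b.  Since the integrand is a finite sum of scalar functions times fixed
  elements, its integral is the corresponding sum of scalar integrals times those elements.\<close>
definition int_poly ::
  "(complex \<Rightarrow> 'a::ring_1) \<Rightarrow> ('n::finite \<Rightarrow> 'n \<Rightarrow> 'a) \<Rightarrow> complex poly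
     \<Rightarrow> (complex^'n \<Rightarrow> complex) \<Rightarrow> 'a" where
  "int_poly \<phi> e q s =
     (\<Sum>k\<le>degree q. \<Sum>w\<in>{w :: ('n \<times> 'n) list. length w = k}.
        \<phi> (coeff q k * sphere_int (\<lambda>v. s v * wmono w v)) * wprod e w)"

text \<open>phi : complex -> A makes the ring A a complex algebra (central unital ring map).\<close>
definition complex_alg_map :: "(complex \<Rightarrow> 'a::ring_1) \<Rightarrow> bool" where
  "complex_alg_map \<phi> \<longleftrightarrow> \<phi> 1 = 1 \<and> (\<forall>c d. \<phi> (c + d) = \<phi> c + \<phi> d)
     \<and> (\<forall>c d. \<phi> (c * d) = \<phi> c * \<phi> d) \<and> (\<forall>c z. \<phi> c * z = z * \<phi> c)"

end

theory Submission
  imports Defs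
begin

text \<open>The integrals only enter through the commutators \<open>[y\<^sub>j, x\<^sub>i] = K i j\<close>, so the identity is
  a computation in any ring in which the \<open>x\<^sub>i, y\<^sub>i\<close> commute with the Clifford generators.
  Expanding \<open>D\<^sup>2\<close>, the terms \<open>x\<^sub>i x\<^sub>j \<otimes> y\<^sub>i y\<^sub>j\<close> and their dual cancel because a symmetric
  tensor is paired with an antisymmetric one; reordering the mixed terms with the
  Clifford relation and \<open>[y\<^sub>j, x\<^sub>i] = K i j\<close> leaves \<open>\<Omega> \<otimes> 1\<close> minus \<open>K i j \<otimes> (y\<^sub>i x\<^sub>j - \<delta>\<^sub>i\<^sub>j)\<close>,
  and \<open>y\<^sub>i x\<^sub>j - \<delta>\<^sub>i\<^sub>j = 2 \<gamma>(E\<^sub>i\<^sub>j)\<close>.\<close>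

lemma complex_alg_mapD:
  assumes "complex_alg_map \<phi>"
  shows "\<phi> 1 = 1" "\<phi> (c + d) = \<phi> c + \<phi> d"
  using assms unfolding complex_alg_map_def by blast+

lemma complex_alg_map_double_eq_0:
  fixes \<phi> :: "complex \<Rightarrow> 'a::ring_1" and z :: 'a
  assumes "complex_alg_map \<phi>" and "z + z = 0"
  shows "z = 0"
proof -
  have "\<phi> (1/2) + \<phi> (1/2) = 1"
    using complex_alg_mapD(2)[OF assms(1), of "1/2" "1/2"] complex_alg_mapD(1)[OF assms(1)]
    by simp
  then have "z = \<phi> (1/2) * (z + z)"
    by (metis distrib_left distrib_right mult_1)
  with assms(2) show ?thesis by simp
qed

lemma complex_alg_map_quarter:
  fixes \<phi> :: "complex \<Rightarrow> 'a::ring_1" and z :: 'a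
  assumes "complex_alg_map \<phi>"
  shows "2 * (\<phi> (1/4) * (2 * z)) = z"
proof -
  note \<phi> = complex_alg_mapD[OF assms]
  have "\<phi> (1/4) + \<phi> (1/4) + \<phi> (1/4) + \<phi> (1/4) = 1"
    using \<phi>(2)[of "1/4" "1/4"] \<phi>(2)[of "1/2" "1/4"] \<phi>(2)[of "3/4" "1/4"] \<phi>(1) by simp
  then have "z = (\<phi> (1/4) + \<phi> (1/4) + \<phi> (1/4) + \<phi> (1/4)) * z" by simp
  also have "\<dots> = 2 * (\<phi> (1/4) * (2 * z))" by (simp add: algebra_simps mult_2 mult_2_right)
  finally show ?thesis by simp
qed

lemma mult_swap_inner:
  fixes a b c d :: "'a::semigroup_mult"
  assumes "b * c = c * b"
  shows "a * b * (c * d) = a * c * (b * d)"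
  by (metis assms mult.assoc)

lemma sum_symmetric_times_antisymmetric_eq_0:
  fixes a b :: "'n::finite \<Rightarrow> 'n \<Rightarrow> 'a::ring"
  assumes torsion_free: "\<And>z::'a. z + z = 0 \<Longrightarrow> z = 0"
    and sym: "\<And>i j. a i j = a j i"
    and antisym: "\<And>i j. b i j + b j i = 0"
  shows "(\<Sum>i\<in>UNIV. \<Sum>j\<in>UNIV. a i j * b i j) = 0" (is "?S = 0")
proof (rule torsion_free)
  have "0 = (\<Sum>i\<in>UNIV. \<Sum>j\<in>UNIV. a i j * (b i j + b j i))"
    by (simp add: antisym)
  also have "\<dots> = ?S + (\<Sum>i\<in>UNIV. \<Sum>j\<in>UNIV. a j i * b j i)"
    by (simp add: distrib_left sum.distrib sym)
  also have "(\<Sum>i\<in>UNIV. \<Sum>j\<in>UNIV. a j i * b j i) = ?S"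
    by (rule sum.swap[symmetric])
  finally show "?S + ?S = 0" by simp
qed

lemma dirac_square:
  fixes x y cx cy :: "'n::finite \<Rightarrow> 'a::ring_1"
    and K :: "'n \<Rightarrow> 'n \<Rightarrow> 'a"
  assumes torsion_free: "\<And>z::'a. z + z = 0 \<Longrightarrow> z = 0"
    and xx: "\<And>i j. x i * x j = x j * x i"
    and yy: "\<And>i j. y i * y j = y j * y i"
    and yx: "\<And>i j. y j * x i = x i * y j + K i j"
    and cxx: "\<And>i j. cx i * cx j + cx j * cx i = 0"
    and cyy: "\<And>i j. cy i * cy j + cy j * cy i = 0"
    and cxy: "\<And>i j. cx i * cy j + cy j * cx i = (if i = j then 2 else 0)"
    and comm: "\<And>i k. x i * cx k = cx k * x i" "\<And>i k. x i * cy k = cy k * x i"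
              "\<And>i k. y i * cx k = cx k * y i" "\<And>i k. y i * cy k = cy k * y i"
  shows "(\<Sum>i\<in>UNIV. x i * cy i + y i * cx i) * (\<Sum>i\<in>UNIV. x i * cy i + y i * cx i)
         = (\<Sum>i\<in>UNIV. x i * y i + y i * x i)
           - (\<Sum>i\<in>UNIV. \<Sum>j\<in>UNIV. K i j * (cy i * cx j - (if i = j then 1 else 0)))"
proof -
  define A where "A i = x i * cy i + y i * cx i" for i
  have A_times_A: "A i * A j = x i * x j * (cy i * cy j) + y i * y j * (cx i * cx j)
      + x i * y j * (cy i * cx j) + y i * x j * (cx i * cy j)" for i j
    unfolding A_def distrib_left distrib_right
      mult_swap_inner[OF comm(2)[symmetric]] mult_swap_inner[OF comm(3)[symmetric]]
      mult_swap_inner[OF comm(4)[symmetric]] mult_swap_inner[OF comm(1)[symmetric]]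
    by (simp add: algebra_simps)
  have xx_cycy: "(\<Sum>i\<in>UNIV. \<Sum>j\<in>UNIV. x i * x j * (cy i * cy j)) = 0"
    using sum_symmetric_times_antisymmetric_eq_0[OF torsion_free xx cyy] .
  have yy_cxcx: "(\<Sum>i\<in>UNIV. \<Sum>j\<in>UNIV. y i * y j * (cx i * cx j)) = 0"
    using sum_symmetric_times_antisymmetric_eq_0[OF torsion_free yy cxx] .
  have cx_cy: "cx j * cy i = (if i = j then 2 else 0) - cy i * cx j" for i j
    using cxy[of j i] by (auto simp: algebra_simps eq_diff_eq)
  have mixed: "x i * y j * (cy i * cx j) + y j * x i * (cx j * cy i)
      = (if i = j then x i * y i + y i * x i else 0)
        - K i j * (cy i * cx j - (if i = j then 1 else 0))" for i j
    unfolding yx cx_cy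
    by (cases "i = j") (simp_all add: algebra_simps mult_2 mult_2_right yx[of i i])
  have "(\<Sum>i\<in>UNIV. A i) * (\<Sum>i\<in>UNIV. A i) = (\<Sum>i\<in>UNIV. \<Sum>j\<in>UNIV. A i * A j)"
    by (simp add: sum_product)
  also have "\<dots> = (\<Sum>i\<in>UNIV. \<Sum>j\<in>UNIV. x i * y j * (cy i * cx j))
      + (\<Sum>i\<in>UNIV. \<Sum>j\<in>UNIV. y i * x j * (cx i * cy j))"
    unfolding A_times_A by (simp add: sum.distrib xx_cycy yy_cxcx)
  also have "(\<Sum>i\<in>UNIV. \<Sum>j\<in>UNIV. y i * x j * (cx i * cy j))
      = (\<Sum>i\<in>UNIV. \<Sum>j\<in>UNIV. y j * x i * (cx j * cy i))"
    by (rule sum.swap)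
  also have "(\<Sum>i\<in>UNIV. \<Sum>j\<in>UNIV. x i * y j * (cy i * cx j))
      + (\<Sum>i\<in>UNIV. \<Sum>j\<in>UNIV. y j * x i * (cx j * cy i))
      = (\<Sum>i\<in>UNIV. \<Sum>j\<in>UNIV. (if i = j then x i * y i + y i * x i else 0)
            - K i j * (cy i * cx j - (if i = j then 1 else 0)))"
    unfolding mixed[symmetric] by (simp add: sum.distrib)
  finally show ?thesis
    unfolding A_def by (simp add: sum_subtractf)
qed

lemma clifford_gamma_double:
  fixes cx cy :: "'n \<Rightarrow> 'a::ring_1"
  assumes "complex_alg_map \<phi>"
    and cxy: "\<And>i j. cx i * cy j + cy j * cx i = (if i = j then 2 else 0)"
  shows "2 * (\<phi> (1/4) * (cy a * cx b - cx b * cy a)) = cy a * cx b - (if a = b then 1 else 0)"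
proof -
  have "cy a * cx b - cx b * cy a = 2 * (cy a * cx b - (if a = b then 1 else 0))"
    using cxy[of b a] by (cases "a = b") (simp_all add: algebra_simps mult_2 eq_diff_eq)
  then show ?thesis
    by (simp only: complex_alg_map_quarter[OF assms(1)])
qed

theorem mainTheorem2:
  fixes \<phi> :: "complex \<Rightarrow> 'a::ring_1"
    and \<xi> :: "complex poly"
    and x y cx cy :: "'n::finite \<Rightarrow> 'a"
    and e :: "'n \<Rightarrow> 'n \<Rightarrow> 'a"
  defines "q \<equiv> xi_tilde CARD('n) \<xi>"
  assumes phi: "complex_alg_map \<phi>"
    and gl: "\<And>i j k l. e i j * e k l - e k l * e i j
               = (if j = k then e i l else 0) - (if l = i then e k j else 0)"
    and act_y: "\<And>i j k. e i j * y k - y k * e i j = (if j = k then y i else 0)"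
    and act_x: "\<And>i j k. e i j * x k - x k * e i j = - (if i = k then x j else 0)"
    and xx: "\<And>i j. x i * x j = x j * x i"
    and yy: "\<And>i j. y i * y j = y j * y i"
    and yx: "\<And>i j. y i * x j - x j * y i = int_poly \<phi> e q (\<lambda>v. v$j * cnj (v$i))"
    and cxx: "\<And>i j. cx i * cx j + cx j * cx i = 0"
    and cyy: "\<And>i j. cy i * cy j + cy j * cy i = 0"
    and cxy: "\<And>i j. cx i * cy j + cy j * cx i = (if i = j then 2 else 0)"
    and comm: "\<And>i k. x i * cx k = cx k * x i" "\<And>i k. x i * cy k = cy k * x i"
              "\<And>i k. y i * cx k = cx k * y i" "\<And>i k. y i * cy k = cy k * y i"
              "\<And>i j k. e i j * cx k = cx k * e i j" "\<And>i j k. e i j * cy k = cy k * e i j"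
  shows "(\<Sum>i\<in>UNIV. x i * cy i + y i * cx i) * (\<Sum>i\<in>UNIV. x i * cy i + y i * cx i)
         = (\<Sum>i\<in>UNIV. x i * y i + y i * x i)
           - 2 * (\<Sum>a\<in>UNIV. \<Sum>b\<in>UNIV. int_poly \<phi> e q (\<lambda>v. v$a * cnj (v$b))
                     * (\<phi> (1/4) * (cy a * cx b - cx b * cy a)))"
proof -
  define K where "K i j = int_poly \<phi> e q (\<lambda>v. v$i * cnj (v$j))" for i j
  have yx_K: "y j * x i = x i * y j + K i j" for i j
    using yx[of j i] unfolding K_def by (simp add: algebra_simps)
  have "(\<Sum>i\<in>UNIV. x i * cy i + y i * cx i) * (\<Sum>i\<in>UNIV. x i * cy i + y i * cx i)
      = (\<Sum>i\<in>UNIV. x i * y i + y i * x i)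
        - (\<Sum>a\<in>UNIV. \<Sum>b\<in>UNIV. K a b * (cy a * cx b - (if a = b then 1 else 0)))"
    by (rule dirac_square[OF complex_alg_map_double_eq_0[OF phi] xx yy yx_K cxx cyy cxy comm(1-4)])
  also have "(\<Sum>a\<in>UNIV. \<Sum>b\<in>UNIV. K a b * (cy a * cx b - (if a = b then 1 else 0)))
      = 2 * (\<Sum>a\<in>UNIV. \<Sum>b\<in>UNIV. K a b * (\<phi> (1/4) * (cy a * cx b - cx b * cy a)))"
    unfolding sum_distrib_left mult.assoc[symmetric] mult_2 mult_2_right[symmetric]
    by (simp add: mult.assoc clifford_gamma_double[OF phi cxy, symmetric])
  finally show ?thesis unfolding K_def .
qed

end
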